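(* Let $X\in\mathbb{R}^{n\times p}$, $\beta_0\in\mathbb{R}^p$ with support $\{1,\dots,s\}$, $\lambda_0>0$, $\lambda>0$, $c_1\in[0,1)$ and $\kappa_0>0$. Assume $p_\lambda:[0,\infty)\to[0,\infty)$ is continuously differentiable on $(0,\infty)$, increasing and concave, with $p_\lambda(0)=0$, $p_\lambda(\infty)=\lim_{t\to\infty}p_\lambda(t)<\infty$, $p_\lambda'\{(1-c_1)\lambda\}\le\lambda_0/4$, and $\min_{1\le j\le s}|\beta_{0,j}|>\max\{(1-c_1)\lambda,\,2\kappa_0^{-1}p_\lambda^{1/2}(\infty)\}$. Assume $\min\{n^{-1/2}\|Xv\|_2:\|v\|_2=1,\|v\|_0<2s\}\ge\kappa_0$. Let $\widehat\beta\in\mathbb{R}^p$ be any vector each of whose components is either $0$ or of magnitude larger than $(1-c_1)\lambda$, and let $\delta=\widehat\beta-\beta_0$. Then $$\sum_{j=1}^p p_\lambda(|\beta_{0,j}|)-\sum_{j=1}^p p_\lambda(|\widehat\beta_j|)\le (4n)^{-1}\|X\delta\|_2^2+\tfrac14\lambda_0\|\delta\|_1.$$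
   Context: $\|v\|_0$ denotes the number of nonzero entries of $v$. *)

theory Defs
  imports "HOL-Analysis.Analysis"
begin

text \<open>Vectors in R^p are represented as functions nat => real, using only the
entries with index in {1..p}; an n x p matrix is a function nat => nat => real,
using only entries (i,j) with i in {1..n}, j in {1..p}.\<close>

definition l0norm :: "nat \<Rightarrow> (nat \<Rightarrow> real) \<Rightarrow> nat" where
  "l0norm p v = card {j \<in> {1..p}. v j \<noteq> 0}"

definition l1norm :: "nat \<Rightarrow> (nat \<Rightarrow> real) \<Rightarrow> real" where
  "l1norm p v = (\<Sum>j=1..p. \<bar>v j\<bar>)"

definition l2norm :: "nat \<Rightarrow> (nat \<Rightarrow> real) \<Rightarrow> real" where
  "l2norm p v = sqrt (\<Sum>j=1..p. (v j)\<^sup>2)"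

definition matvec :: "nat \<Rightarrow> (nat \<Rightarrow> nat \<Rightarrow> real) \<Rightarrow> (nat \<Rightarrow> real) \<Rightarrow> (nat \<Rightarrow> real)" where
  "matvec p X v = (\<lambda>i. \<Sum>j=1..p. X i j * v j)"

end

theory Submission
  imports Defs
begin

text \<open>Call a coordinate missed if \<open>beta0\<close> is nonzero there but \<open>betahat\<close> vanishes, and
spurious in the opposite case; on every other coordinate both vanish or both exceed
\<open>t = (1 - c1) * lambda\<close> in modulus. Above \<open>t\<close>, concavity bounds every increment of the penalty by
\<open>pen'(t) \<le> lambda0 / 4\<close> times its length, so the penalty difference is at most
\<open>lambda0 / 4 * \<parallel>delta\<parallel>\<^sub>1\<close>, plus \<open>pen t\<close> for each missed and minus \<open>pen t\<close> for each
spurious coordinate. If the missed coordinates are the majority, \<open>delta\<close> has fewer than \<open>2s\<close>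
nonzero entries, and the restricted eigenvalue bound together with the beta-min condition gives
\<open>\<parallel>X delta\<parallel>\<^sub>2\<^sup>2 \<ge> 4n * pinf\<close> per missed coordinate, which pays for the excess.\<close>

lemma concave_on_le_tangent:
  fixes f :: "real \<Rightarrow> real"
  assumes "concave_on A f" "connected A" "c \<in> interior A" "x \<in> A"
    and "(f has_real_derivative f') (at c)"
  shows "f x - f c \<le> f' * (x - c)"
proof -
  have "convex_on A (\<lambda>x. - f x)"
    using assms(1) by (simp add: convex_on_iff_concave)
  moreover have "((\<lambda>x. - f x) has_real_derivative - f') (at c within A)"
    using assms(5) by (auto intro: derivative_intros has_field_derivative_at_within)
  ultimately show ?thesis
    using convex_on_imp_above_tangent assms(2-4) by fastforce
qed

lemma concave_on_increment_le_deriv: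
  fixes f :: "real \<Rightarrow> real"
  assumes conc: "concave_on A f" "connected A"
    and t: "t \<in> interior A" "f differentiable (at t)"
    and x: "x \<in> interior A" "f differentiable (at x)"
    and y: "y \<in> A" and "t \<le> x" "x \<le> y"
  shows "f y - f x \<le> deriv f t * (y - x)"
proof -
  have deriv: "(f has_real_derivative deriv f z) (at z)"
    if "f differentiable (at z)" for z
    using that by (simp add: DERIV_deriv_iff_real_differentiable)
  have in_A: "t \<in> A" "x \<in> A" using t(1) x(1) interior_subset by auto
  have "f y - f x \<le> deriv f x * (y - x)"
    using concave_on_le_tangent[OF conc x(1) y deriv[OF x(2)]] .
  moreover have "deriv f x * (y - x) \<le> deriv f t * (y - x)"
  proof -
    have "f x - f t \<le> deriv f t * (x - t)"
      using concave_on_le_tangent[OF conc t(1) in_A(2) deriv[OF t(2)]] .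
    moreover have "f t - f x \<le> deriv f x * (t - x)"
      using concave_on_le_tangent[OF conc x(1) in_A(1) deriv[OF x(2)]] .
    ultimately have "0 \<le> (deriv f t - deriv f x) * (x - t)"
      by (simp add: algebra_simps)
    then have "t < x \<Longrightarrow> deriv f x \<le> deriv f t"
      by (simp add: zero_le_mult_iff)
    then show ?thesis
      using \<open>t \<le> x\<close> \<open>x \<le> y\<close> by (cases "t = x") (auto intro: mult_right_mono)
  qed
  ultimately show ?thesis by linarith
qed

lemma mono_on_le_limit_at_top:
  fixes f :: "real \<Rightarrow> real"
  assumes "mono_on {a..} f" "(f \<longlongrightarrow> l) at_top" "a \<le> x"
  shows "f x \<le> l"
proof (rule tendsto_lowerbound[OF assms(2)])
  show "\<forall>\<^sub>F y in at_top. f x \<le> f y"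
    unfolding eventually_at_top_linorder
    using assms(1,3) by (intro exI[of _ x]) (auto intro: mono_onD)
qed simp

lemma penalty_diff_le:
  fixes pen :: "real \<Rightarrow> real"
  assumes mono: "mono_on {0..} pen" and zero: "pen 0 = 0"
    and thr: "0 \<le> thr" and L: "0 \<le> L"
    and chord: "\<And>x y. thr \<le> x \<Longrightarrow> x \<le> y \<Longrightarrow> pen y - pen x \<le> L * (y - x)"
    and u: "u = 0 \<or> thr < \<bar>u\<bar>" and v: "v = 0 \<or> thr < \<bar>v\<bar>"
  shows "pen \<bar>u\<bar> - pen \<bar>v\<bar>
           \<le> L * \<bar>v - u\<bar> + pen thr * (of_bool (u \<noteq> 0 \<and> v = 0) - of_bool (u = 0 \<and> v \<noteq> 0))"
proof -
  have pen_le: "pen x \<le> pen y" if "0 \<le> x" "x \<le> y" for x y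
    using mono that by (auto intro: mono_onD)
  consider "u \<noteq> 0" "v \<noteq> 0" | "u \<noteq> 0" "v = 0" | "u = 0" "v \<noteq> 0" | "u = 0" "v = 0"
    by blast
  then show ?thesis
  proof cases
    case 1
    then have "thr < \<bar>u\<bar>" "thr < \<bar>v\<bar>" using u v by auto
    have "pen \<bar>u\<bar> - pen \<bar>v\<bar> \<le> L * \<bar>v - u\<bar>"
    proof (cases "\<bar>v\<bar> \<le> \<bar>u\<bar>")
      case True
      then have "pen \<bar>u\<bar> - pen \<bar>v\<bar> \<le> L * (\<bar>u\<bar> - \<bar>v\<bar>)"
        using chord \<open>thr < \<bar>v\<bar>\<close> by simp
      also have "\<dots> \<le> L * \<bar>v - u\<bar>"
        using L by (intro mult_left_mono) auto
      finally show ?thesis .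
    next
      case False
      moreover have "0 \<le> L * \<bar>v - u\<bar>" using L by simp
      ultimately show ?thesis using pen_le[of "\<bar>u\<bar>" "\<bar>v\<bar>"] by simp
    qed
    with 1 show ?thesis by simp
  next
    case 2
    then have "pen \<bar>u\<bar> - pen thr \<le> L * (\<bar>u\<bar> - thr)"
      using u chord by simp
    moreover have "0 \<le> L * thr" using L thr by simp
    ultimately show ?thesis using 2 zero by (simp add: algebra_simps)
  next
    case 3
    then have "pen thr \<le> pen \<bar>v\<bar>" using v thr pen_le by simp
    moreover have "0 \<le> L * \<bar>v\<bar>" using L by simp
    ultimately show ?thesis using 3 zero by simp
  qed simp
qed

lemma penalty_sum_diff_le:
  fixes pen :: "real \<Rightarrow> real"
  assumes mono: "mono_on {0..} pen" and zero: "pen 0 = 0"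
    and thr: "0 \<le> thr" and L: "0 \<le> L"
    and chord: "\<And>x y. thr \<le> x \<Longrightarrow> x \<le> y \<Longrightarrow> pen y - pen x \<le> L * (y - x)"
    and u: "\<forall>j\<in>{1..p}. u j = 0 \<or> thr < \<bar>u j\<bar>"
    and v: "\<forall>j\<in>{1..p}. v j = 0 \<or> thr < \<bar>v j\<bar>"
  shows "(\<Sum>j=1..p. pen \<bar>u j\<bar>) - (\<Sum>j=1..p. pen \<bar>v j\<bar>)
           \<le> L * l1norm p (\<lambda>j. v j - u j)
             + pen thr * (card {j\<in>{1..p}. u j \<noteq> 0 \<and> v j = 0}
                          - real (card {j\<in>{1..p}. u j = 0 \<and> v j \<noteq> 0}))"
proof -
  have "(\<Sum>j=1..p. pen \<bar>u j\<bar>) - (\<Sum>j=1..p. pen \<bar>v j\<bar>) = (\<Sum>j=1..p. pen \<bar>u j\<bar> - pen \<bar>v j\<bar>)"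
    by (simp add: sum_subtractf)
  also have "\<dots> \<le> (\<Sum>j=1..p. L * \<bar>v j - u j\<bar>
                     + pen thr * (of_bool (u j \<noteq> 0 \<and> v j = 0) - of_bool (u j = 0 \<and> v j \<noteq> 0)))"
    using penalty_diff_le[OF mono zero thr L chord] u v by (intro sum_mono) blast
  also have "\<dots> = L * l1norm p (\<lambda>j. v j - u j)
             + pen thr * ((\<Sum>j=1..p. of_bool (u j \<noteq> 0 \<and> v j = 0))
                          - (\<Sum>j=1..p. of_bool (u j = 0 \<and> v j \<noteq> 0)))"
    by (simp add: l1norm_def sum.distrib sum_distrib_left[symmetric] sum_subtractf)
  also have "\<dots> = L * l1norm p (\<lambda>j. v j - u j)
             + pen thr * (card {j\<in>{1..p}. u j \<noteq> 0 \<and> v j = 0}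
                          - real (card {j\<in>{1..p}. u j = 0 \<and> v j \<noteq> 0}))"
    by (simp only: sum_of_bool_eq finite_atLeastAtMost Int_def mem_Collect_eq)
  finally show ?thesis .
qed

lemma l0norm_diff_le:
  "l0norm p (\<lambda>j. v j - u j) \<le> l0norm p u + card {j\<in>{1..p}. u j = 0 \<and> v j \<noteq> 0}"
proof -
  have "{j\<in>{1..p}. v j - u j \<noteq> 0} \<subseteq> {j\<in>{1..p}. u j \<noteq> 0} \<union> {j\<in>{1..p}. u j = 0 \<and> v j \<noteq> 0}"
    by auto
  then have "l0norm p (\<lambda>j. v j - u j) \<le> card ({j\<in>{1..p}. u j \<noteq> 0} \<union> {j\<in>{1..p}. u j = 0 \<and> v j \<noteq> 0})"
    unfolding l0norm_def by (intro card_mono) auto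
  also have "\<dots> \<le> l0norm p u + card {j\<in>{1..p}. u j = 0 \<and> v j \<noteq> 0}"
    unfolding l0norm_def by (rule card_Un_le)
  finally show ?thesis .
qed

lemma l2norm_power2: "(l2norm p w)\<^sup>2 = (\<Sum>j=1..p. (w j)\<^sup>2)"
  by (simp add: l2norm_def sum_nonneg)

lemma card_mult_power2_le_l2norm_power2:
  fixes c :: real
  assumes "A \<subseteq> {1..p}" "0 \<le> c" "\<forall>j\<in>A. c \<le> \<bar>w j\<bar>"
  shows "card A * c\<^sup>2 \<le> (l2norm p w)\<^sup>2"
proof -
  have "card A * c\<^sup>2 = (\<Sum>j\<in>A. c\<^sup>2)" by simp
  also have "\<dots> \<le> (\<Sum>j\<in>A. (w j)\<^sup>2)"
    using assms(2,3) by (intro sum_mono) (metis abs_le_square_iff abs_of_nonneg)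
  also have "\<dots> \<le> (\<Sum>j=1..p. (w j)\<^sup>2)"
    using assms(1) by (intro sum_mono2) auto
  finally show ?thesis by (simp add: l2norm_power2)
qed

lemma l2norm_scale: "l2norm p (\<lambda>j. c * w j) = \<bar>c\<bar> * l2norm p w"
  by (simp add: l2norm_def power_mult_distrib sum_distrib_left[symmetric] real_sqrt_mult)

lemma matvec_scale: "matvec p X (\<lambda>j. c * w j) = (\<lambda>i. c * matvec p X w i)"
  by (simp add: matvec_def sum_distrib_left mult_ac)

lemma l0norm_scale: "c \<noteq> 0 \<Longrightarrow> l0norm p (\<lambda>j. c * w j) = l0norm p w"
  by (simp add: l0norm_def)

lemma restricted_eigenvalue_bound:
  assumes RE: "\<forall>v. l2norm p v = 1 \<and> l0norm p v < m \<longrightarrow>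
                 l2norm n (matvec p X v) / sqrt n \<ge> kappa"
    and kappa: "0 \<le> kappa" and w: "l0norm p w < m"
  shows "n * kappa\<^sup>2 * (l2norm p w)\<^sup>2 \<le> (l2norm n (matvec p X w))\<^sup>2"
proof (cases "l2norm p w = 0 \<or> n = 0")
  case True
  then show ?thesis by auto
next
  case False
  define a where "a = l2norm p w"
  have "0 \<le> a" by (simp add: a_def l2norm_def sum_nonneg)
  with False have "0 < a" "0 < sqrt n" by (auto simp: a_def)
  have "l2norm p (\<lambda>j. inverse a * w j) = 1" "l0norm p (\<lambda>j. inverse a * w j) < m"
    using \<open>0 < a\<close> w by (simp_all add: l2norm_scale l0norm_scale a_def)
  with RE have "kappa \<le> l2norm n (matvec p X (\<lambda>j. inverse a * w j)) / sqrt n"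
    by blast
  also have "\<dots> = l2norm n (matvec p X w) / (a * sqrt n)"
    unfolding matvec_scale l2norm_scale using \<open>0 < a\<close> by (simp add: field_simps)
  finally have "kappa * (sqrt n * a) \<le> l2norm n (matvec p X w)"
    using \<open>0 < a\<close> \<open>0 < sqrt n\<close> by (simp add: field_simps)
  then have "(kappa * (sqrt n * a))\<^sup>2 \<le> (l2norm n (matvec p X w))\<^sup>2"
    using kappa \<open>0 < a\<close> by (intro power_mono) auto
  then show ?thesis
    by (simp add: power_mult_distrib a_def mult_ac)
qed

lemma support_imbalance_le_prediction_error:
  assumes RE: "\<forall>v. l2norm p v = 1 \<and> l0norm p v < 2 * s \<longrightarrow>
                 l2norm n (matvec p X v) / sqrt n \<ge> kappa"
    and "1 \<le> n" "0 < kappa" "0 \<le> q" "q \<le> pinf"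
    and sparse: "l0norm p u \<le> s"
    and large: "\<forall>j\<in>{1..p}. u j \<noteq> 0 \<longrightarrow> 2 / kappa * sqrt pinf \<le> \<bar>u j\<bar>"
  shows "q * (card {j\<in>{1..p}. u j \<noteq> 0 \<and> v j = 0} - real (card {j\<in>{1..p}. u j = 0 \<and> v j \<noteq> 0}))
           \<le> (l2norm n (matvec p X (\<lambda>j. v j - u j)))\<^sup>2 / (4 * real n)"
proof -
  define Z where "Z = {j\<in>{1..p}. u j \<noteq> 0 \<and> v j = 0}"
  define N where "N = {j\<in>{1..p}. u j = 0 \<and> v j \<noteq> 0}"
  let ?delta = "\<lambda>j. v j - u j"
  show ?thesis
  proof (cases "card Z \<le> card N")
    case True
    then have "q * (card Z - real (card N)) \<le> 0"
      using \<open>0 \<le> q\<close> by (simp add: mult_nonneg_nonpos)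
    moreover have "0 \<le> (l2norm n (matvec p X ?delta))\<^sup>2 / (4 * real n)"
      by simp
    ultimately show ?thesis
      unfolding Z_def N_def by linarith
  next
    case False
    have "card Z \<le> l0norm p u"
      unfolding l0norm_def Z_def by (intro card_mono) auto
    then have "l0norm p ?delta < 2 * s"
      using l0norm_diff_le[of p v u] False sparse by (simp add: N_def)
    have "(4 * real n) * (card Z * pinf) = n * kappa\<^sup>2 * (card Z * (2 / kappa * sqrt pinf)\<^sup>2)"
      using \<open>0 < kappa\<close> \<open>0 \<le> q\<close> \<open>q \<le> pinf\<close> by (simp add: power_mult_distrib power_divide)
    also have "\<dots> \<le> n * kappa\<^sup>2 * (l2norm p ?delta)\<^sup>2"
      using large \<open>0 < kappa\<close> \<open>0 \<le> q\<close> \<open>q \<le> pinf\<close>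
      by (intro mult_left_mono card_mult_power2_le_l2norm_power2) (auto simp: Z_def)
    also have "\<dots> \<le> (l2norm n (matvec p X ?delta))\<^sup>2"
      using restricted_eigenvalue_bound[OF RE] \<open>0 < kappa\<close> \<open>l0norm p ?delta < 2 * s\<close> by simp
    finally have XZ: "(4 * real n) * (card Z * pinf) \<le> (l2norm n (matvec p X ?delta))\<^sup>2" .
    have "q * (card Z - real (card N)) \<le> q * card Z"
      using \<open>0 \<le> q\<close> by (intro mult_left_mono) auto
    also have "\<dots> \<le> card Z * pinf"
      using \<open>q \<le> pinf\<close> by (simp add: mult.commute mult_right_mono)
    also have "\<dots> = (4 * real n) * (card Z * pinf) / (4 * real n)"
      using \<open>1 \<le> n\<close> by simp
    also have "\<dots> \<le> (l2norm n (matvec p X ?delta))\<^sup>2 / (4 * real n)"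
      using XZ by (intro divide_right_mono) auto
    finally show ?thesis unfolding Z_def N_def .
  qed
qed

theorem mainTheorem6:
  fixes n p s :: nat
    and X :: "nat \<Rightarrow> nat \<Rightarrow> real"
    and beta0 betahat :: "nat \<Rightarrow> real"
    and lambda0 lambda c1 kappa0 pinf :: real
    and pen :: "real \<Rightarrow> real"
  assumes n_pos: "n \<ge> 1"
    and s_le: "s \<le> p"
    and supp: "\<forall>j\<in>{1..p}. beta0 j \<noteq> 0 \<longleftrightarrow> j \<in> {1..s}"
    and lambda0_pos: "lambda0 > 0" and lambda_pos: "lambda > 0"
    and c1: "0 \<le> c1" "c1 < 1"
    and kappa0_pos: "kappa0 > 0"
    and pen_nonneg: "\<forall>t\<ge>0. pen t \<ge> 0"
    and pen_diff: "\<forall>t>0. pen differentiable (at t)"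
    and pen_C1: "continuous_on {0<..} (deriv pen)"
    and pen_mono: "mono_on {0..} pen"
    and pen_concave: "concave_on {0..} pen"
    and pen_zero: "pen 0 = 0"
    and pen_lim: "(pen \<longlongrightarrow> pinf) at_top"
    and pen_deriv: "deriv pen ((1 - c1) * lambda) \<le> lambda0 / 4"
    and beta_min: "\<forall>j\<in>{1..s}. \<bar>beta0 j\<bar> > max ((1 - c1) * lambda) (2 / kappa0 * sqrt pinf)"
    and RE: "\<forall>v. l2norm p v = 1 \<and> l0norm p v < 2 * s \<longrightarrow>
               l2norm n (matvec p X v) / sqrt n \<ge> kappa0"
    and betahat: "\<forall>j\<in>{1..p}. betahat j = 0 \<or> \<bar>betahat j\<bar> > (1 - c1) * lambda"
  shows "(\<Sum>j=1..p. pen \<bar>beta0 j\<bar>) - (\<Sum>j=1..p. pen \<bar>betahat j\<bar>)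
           \<le> (l2norm n (matvec p X (\<lambda>j. betahat j - beta0 j)))\<^sup>2 / (4 * n)
             + lambda0 / 4 * l1norm p (\<lambda>j. betahat j - beta0 j)"
proof -
  define thr where "thr = (1 - c1) * lambda"
  have "0 < thr" using c1 lambda_pos by (simp add: thr_def)
  have chord: "pen y - pen x \<le> lambda0 / 4 * (y - x)" if "thr \<le> x" "x \<le> y" for x y
  proof -
    have "pen y - pen x \<le> deriv pen thr * (y - x)"
      using concave_on_increment_le_deriv[OF pen_concave connected_Ici, of thr x y]
        pen_diff \<open>0 < thr\<close> that by auto
    also have "\<dots> \<le> lambda0 / 4 * (y - x)"
      using pen_deriv that by (intro mult_right_mono) (auto simp: thr_def)
    finally show ?thesis .
  qed
  have pen_thr: "0 \<le> pen thr" "pen thr \<le> pinf"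
    using mono_onD[OF pen_mono, of 0 thr] \<open>0 < thr\<close> pen_zero
      mono_on_le_limit_at_top[OF pen_mono pen_lim, of thr] by auto
  have "l0norm p beta0 \<le> s"
  proof -
    have "{j\<in>{1..p}. beta0 j \<noteq> 0} = {1..s}" using supp s_le by auto
    then show ?thesis by (simp add: l0norm_def)
  qed
  have "\<forall>j\<in>{1..p}. beta0 j = 0 \<or> thr < \<bar>beta0 j\<bar>"
    using supp beta_min by (auto simp: thr_def)
  then have "(\<Sum>j=1..p. pen \<bar>beta0 j\<bar>) - (\<Sum>j=1..p. pen \<bar>betahat j\<bar>)
      \<le> lambda0 / 4 * l1norm p (\<lambda>j. betahat j - beta0 j)
        + pen thr * (card {j\<in>{1..p}. beta0 j \<noteq> 0 \<and> betahat j = 0}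
                     - real (card {j\<in>{1..p}. beta0 j = 0 \<and> betahat j \<noteq> 0}))"
    using penalty_sum_diff_le[OF pen_mono pen_zero, of thr "lambda0 / 4"] chord
      \<open>0 < thr\<close> lambda0_pos betahat by (simp add: thr_def)
  moreover have "\<forall>j\<in>{1..p}. beta0 j \<noteq> 0 \<longrightarrow> 2 / kappa0 * sqrt pinf \<le> \<bar>beta0 j\<bar>"
    using supp beta_min by fastforce
  ultimately show ?thesis
    using support_imbalance_le_prediction_error[OF RE n_pos kappa0_pos pen_thr
        \<open>l0norm p beta0 \<le> s\<close>, of betahat]
    by linarith
qed

end
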